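(* Let $n\ge1$ and let $G\subset GL(2n,\mathbb{R})$ be the subgroup of block matrices $E=\begin{pmatrix}S&O\\C&T\end{pmatrix}$ with $S,T\in GL(n,\mathbb{R})$, $C\in M(n,\mathbb{R})$, with the subspace topology. Let $X=G\times\mathbb{R}^n$ (product topology) with the quandle operation $(E_0,x_0)*(E_1,x_1)=(E_1E_0E_1^{-1},\ S_1x_0+(I-S_1)x_1)$, where $E_i=\begin{pmatrix}S_i&O\\C_i&T_i\end{pmatrix}$. Let $A=\mathbb{R}^n$ with $\eta_{(E_0,x_0),(E_1,x_1)}(a)=T_1a$ and $\tau_{(E_0,x_0),(E_1,x_1)}(a)=(I-T_1)a$. Then $(A,\eta,\tau)$ is a topological $X$-module and $H^2_{GC}(X,A)\neq0$; a nontrivial class is given by $\kappa_{(E_0,x_0),(E_1,x_1)}=C_1(x_0-x_1)$.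
   Context: For a topological quandle $X$, an $X$-module is a triple $(A,\eta,\tau)$ where $A$ is a topological abelian group, $\eta_{x,y}:A\to A$ ($x,y\in X$) are continuous group automorphisms and $\tau_{x,y}:A\to A$ continuous group endomorphisms with: $\eta_{x*y,z}\eta_{x,y}=\eta_{x*z,y*z}\eta_{x,z}$; $\eta_{x*y,z}\tau_{x,y}=\tau_{x*z,y*z}\eta_{y,z}$; $\tau_{x*y,z}=\eta_{x*z,y*z}\tau_{x,z}+\tau_{x*z,y*z}\tau_{y,z}$; $\tau_{x,x}+\eta_{x,x}=\mathrm{id}_A$. The second continuous generalized cohomology group is $H^2_{GC}(X,A)=Z^2/B^2$, where $Z^2$ is the group of continuous maps $\kappa:X\times X\to A$, $(x,y)\mapsto\kappa_{x,y}$, with $\kappa_{x,x}=0$ and $\eta_{x*y,z}\kappa_{x,y}+\kappa_{x*y,z}=\eta_{x*z,y*z}\kappa_{x,z}+\tau_{x*z,y*z}\kappa_{y,z}+\kappa_{x*z,y*z}$ for all $x,y,z$ (equivalently, $(x,a)*(y,b)=(x*y,\eta_{x,y}(a)+\tau_{x,y}(b)+\kappa_{x,y})$ is a quandle operation on $X\times A$), and $B^2$ consists of the maps $(x,y)\mapsto\eta_{x,y}(f(x))+\tau_{x,y}(f(y))-f(x*y)$ for continuous $f:X\to A$. *)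

theory Defs
  imports "HOL-Analysis.Analysis"
begin

definition quandle_on :: "'x set \<Rightarrow> ('x \<Rightarrow> 'x \<Rightarrow> 'x) \<Rightarrow> bool" where
  "quandle_on X op \<longleftrightarrow>
     (\<forall>x\<in>X. \<forall>y\<in>X. op x y \<in> X) \<and>
     (\<forall>x\<in>X. op x x = x) \<and>
     (\<forall>y\<in>X. bij_betw (\<lambda>x. op x y) X X) \<and>
     (\<forall>x\<in>X. \<forall>y\<in>X. \<forall>z\<in>X. op (op x y) z = op (op x z) (op y z))"

text \<open>Topological quandle: the operation is continuous and every right translation
  is a homeomorphism of X (X carries the subspace topology of the ambient type).\<close>
definition topological_quandle :: "'x::topological_space set \<Rightarrow> ('x \<Rightarrow> 'x \<Rightarrow> 'x) \<Rightarrow> bool" where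
  "topological_quandle X op \<longleftrightarrow>
     quandle_on X op \<and>
     continuous_on (X \<times> X) (\<lambda>(x, y). op x y) \<and>
     (\<forall>y\<in>X. \<exists>g. homeomorphism X X (\<lambda>x. op x y) g)"

definition group_endo :: "('a::ab_group_add \<Rightarrow> 'a) \<Rightarrow> bool" where
  "group_endo f \<longleftrightarrow> (\<forall>a b. f (a + b) = f a + f b)"

definition topological_X_module ::
  "'x set \<Rightarrow> ('x \<Rightarrow> 'x \<Rightarrow> 'x) \<Rightarrow> ('x \<Rightarrow> 'x \<Rightarrow> 'a::{ab_group_add,topological_space} \<Rightarrow> 'a)
     \<Rightarrow> ('x \<Rightarrow> 'x \<Rightarrow> 'a \<Rightarrow> 'a) \<Rightarrow> bool" where
  "topological_X_module X op eta tau \<longleftrightarrow>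
     (\<forall>x\<in>X. \<forall>y\<in>X.
        group_endo (eta x y) \<and> bij (eta x y) \<and> continuous_on UNIV (eta x y) \<and>
        group_endo (tau x y) \<and> continuous_on UNIV (tau x y)) \<and>
     (\<forall>x\<in>X. \<forall>y\<in>X. \<forall>z\<in>X.
        eta (op x y) z \<circ> eta x y = eta (op x z) (op y z) \<circ> eta x z) \<and>
     (\<forall>x\<in>X. \<forall>y\<in>X. \<forall>z\<in>X.
        eta (op x y) z \<circ> tau x y = tau (op x z) (op y z) \<circ> eta y z) \<and>
     (\<forall>x\<in>X. \<forall>y\<in>X. \<forall>z\<in>X. \<forall>a.
        tau (op x y) z a = eta (op x z) (op y z) (tau x z a) + tau (op x z) (op y z) (tau y z a)) \<and>
     (\<forall>x\<in>X. \<forall>a. tau x x a + eta x x a = a)"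

definition GC_cocycle ::
  "'x::topological_space set \<Rightarrow> ('x \<Rightarrow> 'x \<Rightarrow> 'x) \<Rightarrow> ('x \<Rightarrow> 'x \<Rightarrow> 'a::{ab_group_add,topological_space} \<Rightarrow> 'a)
     \<Rightarrow> ('x \<Rightarrow> 'x \<Rightarrow> 'a \<Rightarrow> 'a) \<Rightarrow> ('x \<Rightarrow> 'x \<Rightarrow> 'a) \<Rightarrow> bool" where
  "GC_cocycle X op eta tau \<kappa> \<longleftrightarrow>
     continuous_on (X \<times> X) (\<lambda>(x, y). \<kappa> x y) \<and>
     (\<forall>x\<in>X. \<kappa> x x = 0) \<and>
     (\<forall>x\<in>X. \<forall>y\<in>X. \<forall>z\<in>X.
        eta (op x y) z (\<kappa> x y) + \<kappa> (op x y) z =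
        eta (op x z) (op y z) (\<kappa> x z) + tau (op x z) (op y z) (\<kappa> y z) + \<kappa> (op x z) (op y z))"

text \<open>Membership in B^2_GC(X, A) (only values on X \<times> X matter).\<close>
definition GC_coboundary ::
  "'x::topological_space set \<Rightarrow> ('x \<Rightarrow> 'x \<Rightarrow> 'x) \<Rightarrow> ('x \<Rightarrow> 'x \<Rightarrow> 'a::{ab_group_add,topological_space} \<Rightarrow> 'a)
     \<Rightarrow> ('x \<Rightarrow> 'x \<Rightarrow> 'a \<Rightarrow> 'a) \<Rightarrow> ('x \<Rightarrow> 'x \<Rightarrow> 'a) \<Rightarrow> bool" where
  "GC_coboundary X op eta tau \<kappa> \<longleftrightarrow>
     (\<exists>f. continuous_on X f \<and>
        (\<forall>x\<in>X. \<forall>y\<in>X. \<kappa> x y = eta x y (f x) + tau x y (f y) - f (op x y)))"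

text \<open>2n x 2n real matrices are indexed by 'n + 'n; blocks S (upper left),
  upper right, C (lower left), T (lower right).\<close>
type_synonym 'n bigmat = "real ^ ('n + 'n) ^ ('n + 'n)"

definition blkS :: "('n::finite) bigmat \<Rightarrow> real ^ 'n ^ 'n" where
  "blkS E = (\<chi> i j. E $ Inl i $ Inl j)"
definition blkO :: "('n::finite) bigmat \<Rightarrow> real ^ 'n ^ 'n" where
  "blkO E = (\<chi> i j. E $ Inl i $ Inr j)"
definition blkC :: "('n::finite) bigmat \<Rightarrow> real ^ 'n ^ 'n" where
  "blkC E = (\<chi> i j. E $ Inr i $ Inl j)"
definition blkT :: "('n::finite) bigmat \<Rightarrow> real ^ 'n ^ 'n" where
  "blkT E = (\<chi> i j. E $ Inr i $ Inr j)"

definition Gblk :: "('n::finite) bigmat set" where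
  "Gblk = {E. blkO E = 0 \<and> invertible (blkS E) \<and> invertible (blkT E)}"

definition Xex :: "(('n::finite) bigmat \<times> (real ^ 'n)) set" where
  "Xex = Gblk \<times> UNIV"

definition qop :: "('n::finite) bigmat \<times> (real ^ 'n) \<Rightarrow> 'n bigmat \<times> (real ^ 'n) \<Rightarrow> 'n bigmat \<times> (real ^ 'n)" where
  "qop p q = (fst q ** fst p ** matrix_inv (fst q),
              blkS (fst q) *v snd p + (mat 1 - blkS (fst q)) *v snd q)"

definition eta_ex :: "('n::finite) bigmat \<times> (real ^ 'n) \<Rightarrow> 'n bigmat \<times> (real ^ 'n) \<Rightarrow> real ^ 'n \<Rightarrow> real ^ 'n" where
  "eta_ex p q a = blkT (fst q) *v a"

definition tau_ex :: "('n::finite) bigmat \<times> (real ^ 'n) \<Rightarrow> 'n bigmat \<times> (real ^ 'n) \<Rightarrow> real ^ 'n \<Rightarrow> real ^ 'n" where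
  "tau_ex p q a = (mat 1 - blkT (fst q)) *v a"

definition kappa_ex :: "('n::finite) bigmat \<times> (real ^ 'n) \<Rightarrow> 'n bigmat \<times> (real ^ 'n) \<Rightarrow> real ^ 'n" where
  "kappa_ex p q = blkC (fst q) *v (snd p - snd q)"

end

theory Submission
  imports Defs
begin

text \<open>
  Write \<open>T(E)\<close> and \<open>S(E)\<close> for the diagonal blocks of \<open>E \<in> G\<close>; they are
  homomorphisms \<open>G \<rightarrow> GL(n)\<close>. Conjugation in \<open>G\<close> therefore conjugates the blocks,
  which makes \<open>X\<close> a quandle (an affine quandle twisted by \<open>S\<close>) and gives the
  equivariance \<open>T(y * z) T(z) = T(z) T(y)\<close> that makes \<open>\<eta> = T, \<tau> = I - T\<close> an
  \<open>X\<close>-module. The lower-left block of \<open>K = F E F\<^sup>-\<^sup>1\<close> satisfies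
  \<open>C(K) S(F) = C(F) S(E) + T(F) C(E) - T(K) C(F)\<close>, as one sees by comparing lower-left
  blocks in \<open>K F = F E\<close>; this identity is exactly the cocycle condition for \<open>\<kappa>\<close>.
  Finally, for \<open>x = (I, v)\<close> and \<open>y = (E, 0)\<close> with \<open>S(E) = T(E) = C(E) = I\<close> we have
  \<open>x * y = x\<close>, \<open>\<eta> = id\<close> and \<open>\<tau> = 0\<close>, so every coboundary vanishes at
  \<open>(x, y)\<close>, whereas \<open>\<kappa>(x, y) = v\<close>.
\<close>

lemma matrix_inv_right:
  fixes A :: "'a::semiring_1^'n^'m"
  assumes "invertible A"
  shows "A ** matrix_inv A = mat 1"
  using someI_ex[OF assms[unfolded invertible_def]] unfolding matrix_inv_def by blast

lemma matrix_inv_left: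
  fixes A :: "'a::semiring_1^'n^'m"
  assumes "invertible A"
  shows "matrix_inv A ** A = mat 1"
  using someI_ex[OF assms[unfolded invertible_def]] unfolding matrix_inv_def by blast

lemma matrix_inv_unique:
  fixes A :: "'a::semiring_1^'n^'m"
  assumes "A ** B = mat 1" "B ** A = mat 1"
  shows "matrix_inv A = B"
proof -
  have inv: "invertible A" using assms unfolding invertible_def by blast
  have "matrix_inv A = (matrix_inv A ** A) ** B"
    by (simp add: assms(1) matrix_mul_assoc[symmetric])
  then show ?thesis by (simp add: matrix_inv_left[OF inv])
qed

lemma invertible_matrix_inv:
  fixes A :: "'a::semiring_1^'n^'m"
  assumes "invertible A"
  shows "invertible (matrix_inv A)"
  using matrix_inv_left[OF assms] matrix_inv_right[OF assms] unfolding invertible_def by blast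

lemma invertible_mat_1: "invertible (mat 1 :: 'a::semiring_1^'n^'n)"
  unfolding invertible_def by auto

lemma matrix_inv_cancel:
  fixes A :: "'a::semiring_1^'n^'m"
  assumes "invertible A"
  shows "matrix_inv A ** (A ** B) = B" "A ** (matrix_inv A ** B') = B'"
    "matrix_inv A *v (A *v v) = v" "A *v (matrix_inv A *v w) = w"
  by (simp_all add: matrix_mul_assoc matrix_vector_mul_assoc
      matrix_inv_left[OF assms] matrix_inv_right[OF assms])

lemma matrix_inv_conj:
  fixes E F :: "'a::semiring_1^'n^'n"
  assumes "invertible E" "invertible F"
  shows "matrix_inv (F ** E ** matrix_inv F) = F ** matrix_inv E ** matrix_inv F"
  by (rule matrix_inv_unique)
     (simp_all add: matrix_mul_assoc[symmetric] matrix_inv_cancel assms matrix_inv_right[OF assms(2)])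

lemma matrix_mul_uminus_right: "(A::'a::ring_1^'n^'m) ** (- B) = - (A ** B)"
  by (simp add: matrix_matrix_mult_def vec_eq_iff sum_negf)

lemma continuous_on_matrix_mult [continuous_intros]:
  fixes f :: "'x::topological_space \<Rightarrow> real^'n^'m" and g :: "'x \<Rightarrow> real^'p^'n"
  assumes "continuous_on S f" "continuous_on S g"
  shows "continuous_on S (\<lambda>x. f x ** g x)"
  unfolding matrix_matrix_mult_def by (intro continuous_intros assms)

lemma continuous_on_matrix_vector_mult [continuous_intros]:
  fixes f :: "'x::topological_space \<Rightarrow> real^'n^'m" and g :: "'x \<Rightarrow> real^'n"
  assumes "continuous_on S f" "continuous_on S g"
  shows "continuous_on S (\<lambda>x. f x *v g x)"
  unfolding matrix_vector_mult_def by (intro continuous_intros assms)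

lemma continuous_on_det [continuous_intros]:
  fixes f :: "'x::topological_space \<Rightarrow> real^'n^'n"
  assumes "continuous_on S f"
  shows "continuous_on S (\<lambda>x. det (f x))"
  unfolding det_def by (intro continuous_intros assms)

lemma matrix_inv_cramer:
  fixes A :: "real^'n^'n"
  assumes "invertible A"
  shows "matrix_inv A = (\<chi> k j. det (\<chi> i l. if l = k then (if i = j then 1 else 0) else A$i$l) / det A)"
proof -
  have "matrix_inv A $ k $ j = det (\<chi> i l. if l = k then (if i = j then 1 else 0) else A$i$l) / det A"
    for k j
  proof -
    define u :: "real^'n" where "u = (\<chi> i. if i = j then 1 else 0)"
    have "A *v (matrix_inv A *v u) = u" by (rule matrix_inv_cancel[OF assms])
    then have "matrix_inv A *v u = (\<chi> k. det (\<chi> i l. if l = k then u$i else A$i$l) / det A)"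
      using cramer assms invertible_det_nz by blast
    moreover have "(matrix_inv A *v u) $ k = matrix_inv A $ k $ j"
      unfolding u_def matrix_vector_mult_def by (simp add: if_distrib cong: if_cong)
    moreover have "(\<chi> i l. if l = k then u$i else A$i$l)
        = (\<chi> i l. if l = k then (if i = j then 1 else 0) else A$i$l)"
      by (simp add: u_def vec_eq_iff)
    ultimately show ?thesis by (simp add: vec_eq_iff)
  qed
  then show ?thesis by (simp add: vec_eq_iff)
qed

lemma continuous_on_matrix_inv [continuous_intros]:
  fixes f :: "'x::topological_space \<Rightarrow> real^'n^'n"
  assumes "continuous_on S f" "\<And>x. x \<in> S \<Longrightarrow> invertible (f x)"
  shows "continuous_on S (\<lambda>x. matrix_inv (f x))"
proof -
  have "continuous_on S (\<lambda>x. \<chi> k j.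
      det (\<chi> i l. if l = k then (if i = j then 1 else 0) else f x $ i $ l) / det (f x))"
  proof (intro continuous_intros)
    fix k j i l
    show "continuous_on S (\<lambda>x. if l = k then (if i = j then 1 else 0) else f x $ i $ l)"
      by (cases "l = k") (auto intro!: continuous_intros assms(1))
  qed (use assms invertible_det_nz in blast)+
  then show ?thesis by (rule continuous_on_eq) (simp add: matrix_inv_cramer assms(2))
qed

definition blk :: "real^'n^'n \<Rightarrow> real^'n^'n \<Rightarrow> real^'n^'n \<Rightarrow> ('n::finite) bigmat" where
  "blk S C T = (\<chi> i j. case (i, j) of
      (Inl a, Inl b) \<Rightarrow> S $ a $ b | (Inl a, Inr b) \<Rightarrow> 0
    | (Inr a, Inl b) \<Rightarrow> C $ a $ b | (Inr a, Inr b) \<Rightarrow> T $ a $ b)"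

lemma blocks_blk [simp]:
  "blkS (blk S C T) = S" "blkO (blk S C T) = 0" "blkC (blk S C T) = C" "blkT (blk S C T) = T"
  by (simp_all add: blkS_def blkO_def blkC_def blkT_def blk_def vec_eq_iff)

lemma blk_blocks:
  assumes "blkO E = 0"
  shows "blk (blkS E) (blkC E) (blkT E) = E"
proof -
  have "E $ Inl a $ Inr b = 0" for a b
    using assms unfolding blkO_def vec_eq_iff by auto
  then show ?thesis
    unfolding blk_def blkS_def blkC_def blkT_def vec_eq_iff by (auto split: sum.splits)
qed

lemma blk_mult:
  "blk S C T ** blk S' C' T' = blk (S ** S') (C ** S' + T ** C') (T ** T')"
  unfolding matrix_matrix_mult_def blk_def vec_eq_iff
  by (auto simp: sum.Plus[of UNIV UNIV, unfolded UNIV_Plus_UNIV] comp_def split: sum.splits)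

lemma mat_1_eq_blk: "mat 1 = blk (mat 1) 0 (mat 1)"
  unfolding mat_def blk_def vec_eq_iff by (auto split: sum.splits)

lemma blk_inverse:
  assumes "invertible S" "invertible T"
  shows "blk S C T ** blk (matrix_inv S) (- (matrix_inv T ** C ** matrix_inv S)) (matrix_inv T) = mat 1"
  by (simp add: blk_mult matrix_inv_right assms matrix_mul_uminus_right
      matrix_mul_assoc matrix_inv_cancel mat_1_eq_blk[symmetric])

lemma invertible_blk:
  assumes "invertible S" "invertible T"
  shows "invertible (blk S C T)"
    and "matrix_inv (blk S C T) = blk (matrix_inv S) (- (matrix_inv T ** C ** matrix_inv S)) (matrix_inv T)"
proof -
  note right = blk_inverse[OF assms]
  then have left: "blk (matrix_inv S) (- (matrix_inv T ** C ** matrix_inv S)) (matrix_inv T) ** blk S C T = mat 1"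
    by (simp add: matrix_left_right_inverse)
  show "invertible (blk S C T)" using right left unfolding invertible_def by blast
  show "matrix_inv (blk S C T) = blk (matrix_inv S) (- (matrix_inv T ** C ** matrix_inv S)) (matrix_inv T)"
    using right left by (rule matrix_inv_unique)
qed

lemma blocks_mult:
  assumes "blkO E = 0" "blkO F = 0"
  shows "blkO (E ** F) = 0" "blkS (E ** F) = blkS E ** blkS F"
    "blkC (E ** F) = blkC E ** blkS F + blkT E ** blkC F" "blkT (E ** F) = blkT E ** blkT F"
  using blk_mult[of "blkS E" "blkC E" "blkT E" "blkS F" "blkC F" "blkT F"]
  by (simp_all add: blk_blocks assms)

lemma Gblk_iff: "E \<in> Gblk \<longleftrightarrow> blkO E = 0 \<and> invertible (blkS E) \<and> invertible (blkT E)"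
  by (simp add: Gblk_def)

lemma blk_in_Gblk: "invertible S \<Longrightarrow> invertible T \<Longrightarrow> blk S C T \<in> Gblk"
  by (simp add: Gblk_iff)

lemma mat_1_in_Gblk: "mat 1 \<in> Gblk"
  by (simp add: mat_1_eq_blk blk_in_Gblk invertible_mat_1)

lemma Gblk_mult: "E \<in> Gblk \<Longrightarrow> F \<in> Gblk \<Longrightarrow> E ** F \<in> Gblk"
  by (simp add: Gblk_iff blocks_mult invertible_mult)

lemma Gblk_invertible:
  assumes "E \<in> Gblk"
  shows "invertible E"
  using invertible_blk(1)[of "blkS E" "blkT E" "blkC E"] assms by (simp add: Gblk_iff blk_blocks)

lemma Gblk_matrix_inv:
  assumes "E \<in> Gblk"
  shows "matrix_inv E \<in> Gblk" "blkS (matrix_inv E) = matrix_inv (blkS E)"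
    "blkT (matrix_inv E) = matrix_inv (blkT E)"
  using invertible_blk(2)[of "blkS E" "blkT E" "blkC E"] assms
  by (simp_all add: Gblk_iff blk_blocks invertible_matrix_inv)

lemma Gblk_conj:
  assumes E: "E \<in> Gblk" and F: "F \<in> Gblk"
  defines "K \<equiv> F ** E ** matrix_inv F"
  shows "K \<in> Gblk" "blkS K = blkS F ** blkS E ** matrix_inv (blkS F)"
    "blkT K = blkT F ** blkT E ** matrix_inv (blkT F)"
    "blkC K ** blkS F = blkC F ** blkS E + blkT F ** blkC E - blkT K ** blkC F"
proof -
  note F' = Gblk_matrix_inv[OF F]
  show K: "K \<in> Gblk" unfolding K_def by (intro Gblk_mult E F F'(1))
  have O: "blkO F = 0" "blkO E = 0" "blkO (F ** E) = 0" "blkO (matrix_inv F) = 0"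
    using E F F'(1) Gblk_mult[OF F E] by (simp_all add: Gblk_iff)
  show "blkS K = blkS F ** blkS E ** matrix_inv (blkS F)"
    "blkT K = blkT F ** blkT E ** matrix_inv (blkT F)"
    unfolding K_def by (simp_all add: blocks_mult O F')
  have "K ** F = F ** E"
    unfolding K_def using matrix_inv_left[OF Gblk_invertible[OF F]]
    by (simp add: matrix_mul_assoc[symmetric])
  then have "blkC K ** blkS F + blkT K ** blkC F = blkC F ** blkS E + blkT F ** blkC E"
    using blocks_mult[of K F] blocks_mult[of F E] K by (simp add: Gblk_iff O)
  then show "blkC K ** blkS F = blkC F ** blkS E + blkT F ** blkC E - blkT K ** blkC F"
    by (simp add: eq_diff_eq)
qed

lemma continuous_on_blocks [continuous_intros]:
  fixes f :: "'x::topological_space \<Rightarrow> ('n::finite) bigmat"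
  assumes "continuous_on S f"
  shows "continuous_on S (\<lambda>x. blkS (f x))" "continuous_on S (\<lambda>x. blkC (f x))"
    "continuous_on S (\<lambda>x. blkT (f x))"
  unfolding blkS_def blkC_def blkT_def by (intro continuous_intros assms)+

lemma bij_betw_homeomorphism:
  assumes "homeomorphism S T f g"
  shows "bij_betw f S T"
  unfolding bij_betw_def
  by (metis assms homeomorphism_apply1 homeomorphism_image1 inj_on_inverseI)

lemma topological_X_module_matrix_action:
  fixes T :: "'x \<Rightarrow> real^'n^'n"
  assumes inv: "\<And>y. y \<in> X \<Longrightarrow> invertible (T y)"
    and equivariant: "\<And>y z. y \<in> X \<Longrightarrow> z \<in> X \<Longrightarrow> T (op y z) ** T z = T z ** T y"
  shows "topological_X_module X op (\<lambda>x y a. T y *v a) (\<lambda>x y a. (mat 1 - T y) *v a)"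
  unfolding topological_X_module_def group_endo_def
proof (intro conjI ballI allI)
  fix y z a assume "y \<in> X" "z \<in> X"
  then have comm: "T (op y z) *v (T z *v a) = T z *v (T y *v a)" for a
    by (simp add: matrix_vector_mul_assoc equivariant)
  fix x
  show "(\<lambda>a. T z *v a) \<circ> (\<lambda>a. T y *v a) = (\<lambda>a. T (op y z) *v a) \<circ> (\<lambda>a. T z *v a)"
    "(\<lambda>a. T z *v a) \<circ> (\<lambda>a. (mat 1 - T y) *v a)
       = (\<lambda>a. (mat 1 - T (op y z)) *v a) \<circ> (\<lambda>a. T z *v a)"
    by (simp_all add: fun_eq_iff comm matrix_vector_mult_diff_rdistrib matrix_vector_mult_diff_distrib)
  show "(mat 1 - T z) *v a = T (op y z) *v ((mat 1 - T z) *v a) + (mat 1 - T (op y z)) *v ((mat 1 - T z) *v a)"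
    by (simp add: matrix_vector_mult_diff_rdistrib)
qed (use inv in \<open>auto simp: invertible_eq_bij matrix_vector_right_distrib
      matrix_vector_mult_diff_rdistrib intro!: continuous_intros\<close>)

lemma GC_coboundary_vanishes:
  assumes "GC_coboundary X op eta tau \<kappa>" "x \<in> X" "y \<in> X" "op x y = x"
    and "\<And>a. eta x y a = a" "\<And>a. tau x y a = 0"
  shows "\<kappa> x y = 0"
  using assms unfolding GC_coboundary_def by force

lemma Xex_iff: "p \<in> Xex \<longleftrightarrow> fst p \<in> Gblk"
  by (cases p) (simp add: Xex_def)

lemma qop_in_Xex: "p \<in> Xex \<Longrightarrow> q \<in> Xex \<Longrightarrow> qop p q \<in> Xex"
  by (simp add: Xex_iff qop_def Gblk_conj)

lemma qop_idem: "p \<in> Xex \<Longrightarrow> qop p p = p"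
  by (simp add: Xex_iff qop_def prod_eq_iff matrix_mul_assoc[symmetric] algebra_simps
      Gblk_invertible matrix_inv_right)

lemma qop_self_distrib:
  assumes "p \<in> Xex" "q \<in> Xex" "r \<in> Xex"
  shows "qop (qop p q) r = qop (qop p r) (qop q r)"
proof -
  obtain E0 a0 E1 a1 E2 a2 where pqr: "p = (E0, a0)" "q = (E1, a1)" "r = (E2, a2)"
    by (cases p, cases q, cases r) auto
  have G: "E1 \<in> Gblk" "E2 \<in> Gblk" using assms pqr by (auto simp: Xex_iff)
  note inv = Gblk_invertible[OF G(1)] Gblk_invertible[OF G(2)]
  have invS: "invertible (blkS E2)" using G by (simp add: Gblk_iff)
  have "matrix_inv (E2 ** E1 ** matrix_inv E2) = E2 ** matrix_inv E1 ** matrix_inv E2"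
    and "blkS (E2 ** E1 ** matrix_inv E2) = blkS E2 ** blkS E1 ** matrix_inv (blkS E2)"
    by (simp_all add: matrix_inv_conj inv Gblk_conj G)
  then show ?thesis
    unfolding pqr qop_def prod_eq_iff fst_conv snd_conv
    by (simp add: matrix_mul_assoc[symmetric] matrix_inv_cancel[OF inv(2)]
        matrix_inv_cancel[OF invS] matrix_vector_mul_assoc[symmetric] algebra_simps)
qed

definition qop_right_inv :: "('n::finite) bigmat \<times> (real ^ 'n) \<Rightarrow> 'n bigmat \<times> (real ^ 'n) \<Rightarrow> 'n bigmat \<times> (real ^ 'n)" where
  "qop_right_inv q p = (matrix_inv (fst q) ** fst p ** fst q,
     matrix_inv (blkS (fst q)) *v (snd p - (mat 1 - blkS (fst q)) *v snd q))"

lemma homeomorphism_qop_right: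
  assumes q: "q \<in> Xex"
  shows "homeomorphism Xex Xex (\<lambda>p. qop p q) (qop_right_inv q)"
proof (rule homeomorphismI)
  have F: "fst q \<in> Gblk" using q by (simp add: Xex_iff)
  have inv: "invertible (fst q)" and invS: "invertible (blkS (fst q))"
    using F by (simp_all add: Gblk_invertible Gblk_iff)
  show "continuous_on Xex (\<lambda>p. qop p q)" "continuous_on Xex (qop_right_inv q)"
    unfolding qop_def qop_right_inv_def by (intro continuous_intros)+
  show "(\<lambda>p. qop p q) ` Xex \<subseteq> Xex" using qop_in_Xex q by blast
  show "qop_right_inv q ` Xex \<subseteq> Xex"
    using F by (auto simp: qop_right_inv_def Xex_iff intro!: Gblk_mult Gblk_matrix_inv)
  fix p
  show "qop_right_inv q (qop p q) = p" "qop (qop_right_inv q p) q = p"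
    by (simp_all add: qop_right_inv_def qop_def prod_eq_iff matrix_mul_assoc[symmetric]
        matrix_inv_cancel[OF inv] matrix_inv_cancel[OF invS] matrix_vector_mul_assoc[symmetric]
        matrix_inv_left[OF inv] matrix_inv_right[OF inv] algebra_simps)
qed

lemma topological_quandle_Xex: "topological_quandle Xex qop"
proof -
  have hom: "\<forall>q\<in>Xex. homeomorphism Xex Xex (\<lambda>p. qop p q) (qop_right_inv q)"
    by (simp add: homeomorphism_qop_right)
  moreover have "continuous_on (Xex \<times> Xex) (\<lambda>(p, q). qop p q)"
    unfolding case_prod_beta' qop_def
    by (intro continuous_intros) (auto simp: Xex_def Gblk_invertible)
  ultimately show ?thesis
    unfolding topological_quandle_def quandle_on_def
    using bij_betw_homeomorphism qop_in_Xex qop_idem qop_self_distrib by blast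
qed

lemma topological_X_module_Xex: "topological_X_module Xex qop eta_ex tau_ex"
  unfolding eta_ex_def[abs_def] tau_ex_def[abs_def]
proof (rule topological_X_module_matrix_action)
  fix q r :: "'n bigmat \<times> (real^'n)" assume "q \<in> Xex" "r \<in> Xex"
  then have G: "fst q \<in> Gblk" "fst r \<in> Gblk" by (simp_all add: Xex_iff)
  then have "blkT (fst (qop q r)) = blkT (fst r) ** blkT (fst q) ** matrix_inv (blkT (fst r))"
    by (simp add: qop_def Gblk_conj)
  with G(2) show "blkT (fst (qop q r)) ** blkT (fst r) = blkT (fst r) ** blkT (fst q)"
    by (simp add: matrix_mul_assoc[symmetric] matrix_inv_left Gblk_iff)
qed (simp add: Xex_iff Gblk_iff)

lemma GC_cocycle_kappa_ex: "GC_cocycle Xex qop eta_ex tau_ex kappa_ex"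
  unfolding GC_cocycle_def
proof (intro conjI ballI)
  show "continuous_on (Xex \<times> Xex) (\<lambda>(p, q). kappa_ex p q)"
    unfolding case_prod_beta' kappa_ex_def by (intro continuous_intros)
next
  fix p q r :: "'n bigmat \<times> (real^'n)" assume "p \<in> Xex" "q \<in> Xex" "r \<in> Xex"
  then obtain E0 a0 E1 a1 E2 a2 where pqr: "p = (E0, a0)" "q = (E1, a1)" "r = (E2, a2)"
    and G: "E1 \<in> Gblk" "E2 \<in> Gblk"
    by (cases p, cases q, cases r) (auto simp: Xex_iff)
  define K where "K = E2 ** E1 ** matrix_inv E2"
  have "snd (qop p r) - snd (qop q r) = blkS E2 *v (a0 - a1)"
    by (simp add: pqr qop_def algebra_simps)
  then have "kappa_ex (qop p r) (qop q r) = (blkC K ** blkS E2) *v (a0 - a1)"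
    by (simp add: kappa_ex_def pqr qop_def K_def matrix_vector_mul_assoc)
  also have "\<dots> = blkC E2 *v (blkS E1 *v (a0 - a1)) + blkT E2 *v (blkC E1 *v (a0 - a1))
      - blkT K *v (blkC E2 *v (a0 - a1))"
    by (simp add: Gblk_conj(4)[OF G, folded K_def] matrix_vector_mul_assoc algebra_simps)
  finally show "eta_ex (qop p q) r (kappa_ex p q) + kappa_ex (qop p q) r =
      eta_ex (qop p r) (qop q r) (kappa_ex p r) + tau_ex (qop p r) (qop q r) (kappa_ex q r)
      + kappa_ex (qop p r) (qop q r)"
    by (simp add: pqr eta_ex_def tau_ex_def kappa_ex_def qop_def K_def[symmetric] algebra_simps)
qed (simp add: kappa_ex_def)

lemma not_GC_coboundary_kappa_ex:
  "\<not> GC_coboundary (Xex :: ('n::finite bigmat \<times> (real^'n)) set) qop eta_ex tau_ex kappa_ex"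
proof
  assume cob: "GC_coboundary (Xex :: ('n bigmat \<times> (real^'n)) set) qop eta_ex tau_ex kappa_ex"
  define v :: "real^'n" where "v = (\<chi> i. 1)"
  define E :: "'n bigmat" where "E = blk (mat 1) (mat 1) (mat 1)"
  have E: "E \<in> Gblk" unfolding E_def by (intro blk_in_Gblk invertible_mat_1)
  have blocks: "blkS E = mat 1" "blkC E = mat 1" "blkT E = mat 1" by (simp_all add: E_def)
  have fixed: "qop (mat 1, v) (E, 0) = (mat 1, v)"
    using matrix_inv_right[OF Gblk_invertible[OF E]] by (simp add: qop_def blocks)
  have "kappa_ex (mat 1, v) (E, 0) = 0"
    by (rule GC_coboundary_vanishes[OF cob _ _ fixed])
       (simp_all add: Xex_iff mat_1_in_Gblk E eta_ex_def tau_ex_def blocks)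
  then show False by (simp add: kappa_ex_def blocks v_def vec_eq_iff)
qed

theorem mainTheorem7:
  shows "topological_quandle (Xex :: ('n::finite bigmat \<times> (real ^ 'n)) set) qop \<and>
         topological_X_module (Xex :: ('n bigmat \<times> (real ^ 'n)) set) qop eta_ex tau_ex \<and>
         GC_cocycle (Xex :: ('n bigmat \<times> (real ^ 'n)) set) qop eta_ex tau_ex kappa_ex \<and>
         \<not> GC_coboundary (Xex :: ('n bigmat \<times> (real ^ 'n)) set) qop eta_ex tau_ex kappa_ex"
  using topological_quandle_Xex topological_X_module_Xex GC_cocycle_kappa_ex
    not_GC_coboundary_kappa_ex by blast

end
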